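(* Let $A$ be the filtered boundary matrix of a Morse decomposition with respect to an admissible enumeration $\sigma_1,\dots,\sigma_n$, and let $B$ be any matrix obtained from $A$ by a finite sequence of operations, each adding some column $s$ to some column $j$ with $s<j$ (for instance any intermediate matrix of ConMat or of a complete column reduction). Let $j$ be a homogeneous column of $B$ and let $s<j$ be a nonzero column of $B$ with $B[\mathrm{low}_B(s),j]=1$. If adding column $s$ to column $j$ changes the pivot of column $j$, then column $s$ is homogeneous, $\sigma_s$ and $\sigma_j$ lie in the same Morse set, and $\mathrm{low}_B(s)=\mathrm{low}_B(j)$.
   Context: $K$ is a finite simplicial complex ($\tau\le\sigma$: $\tau$ is a face of $\sigma$; $\mathrm{cl}(\sigma)=\{\tau:\tau\le\sigma\}$). A multivector field $\mathcal V$ on $K$ is a partition of $K$ into convex sets $V$ (if $\sigma,\tau\in V$ and $\sigma\le\mu\le\tau$ then $\mu\in V$); $[\sigma]_{\mathcal V}$ is the part containing $\sigma$, $F_{\mathcal V}(\sigma)=[\sigma]_{\mathcal V}\cup\mathrm{cl}(\sigma)$, and a path is a sequence $\sigma_1,\dots,\sigma_r$ with $\sigma_k\in F_{\mathcal V}(\sigma_{k-1})$. A Morse decomposition indexed by a finite poset $(P,\le_P)$ is a partition $K=\bigsqcup_{p\in P}M_p$ such that every path from $M_p$ to $M_q$ has $q\le_P p$; $[\sigma]_P$ is the $p$ with $\sigma\in M_p$. An admissible enumeration is $\sigma_1,\dots,\sigma_n$ of all simplices of $K$ such that (a) for some linear extension $\le_{lin}$ of $\le_P$, $i\le j\Rightarrow[\sigma_i]_P\le_{lin}[\sigma_j]_P$;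 (b) if $\sigma_i$ is a proper face of $\sigma_j$ then $i<j$. The filtered boundary matrix $A$ is the $n\times n$ $\mathbb Z_2$-matrix with $A[i,j]=1$ iff $\sigma_i$ is a codimension-one face of $\sigma_j$; row/column $i$ represents $\sigma_i$. Adding column $s$ to column $j$ means replacing column $j$ by the mod-2 sum. For a nonzero column $j$ of a matrix $B$, its pivot $\mathrm{low}_B(j)$ is the largest $i$ with $B[i,j]=1$ (a zero column has no pivot). Column $j$ is homogeneous if nonzero and $\sigma_j$, $\sigma_{\mathrm{low}_B(j)}$ are in the same Morse set. ConMat reduction phase: for $j=1,\dots,n$, for $i=\mathrm{low}(j)$ down to $1$: if the current entry $(i,j)$ is $1$ and some homogeneous column $s<j$ has pivot $i$, add column $s$ to column $j$. A complete column reduction of a matrix is a finite sequence of additions of a column $s$ to a column $j$ with $s<j$ (no homogeneity restriction) ending in a matrix whose nonzero columns have pairwise distinct pivots. *)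

theory Defs
  imports Main
begin

definition simplicial_complex :: "'v set set \<Rightarrow> bool" where
  "simplicial_complex K \<longleftrightarrow> finite K \<and>
     (\<forall>\<sigma>\<in>K. finite \<sigma> \<and> \<sigma> \<noteq> {} \<and> (\<forall>\<tau>. \<tau> \<subseteq> \<sigma> \<and> \<tau> \<noteq> {} \<longrightarrow> \<tau> \<in> K))"

definition cl :: "'v set set \<Rightarrow> 'v set \<Rightarrow> 'v set set" where
  "cl K \<sigma> = {\<tau>\<in>K. \<tau> \<subseteq> \<sigma>}"

definition convex_in :: "'v set set \<Rightarrow> 'v set set \<Rightarrow> bool" where
  "convex_in K V \<longleftrightarrow> V \<subseteq> K \<and>
     (\<forall>\<sigma>\<in>V. \<forall>\<tau>\<in>V. \<forall>\<mu>\<in>K. \<sigma> \<subseteq> \<mu> \<and> \<mu> \<subseteq> \<tau> \<longrightarrow> \<mu> \<in> V)"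

definition multivector_field :: "'v set set \<Rightarrow> 'v set set set \<Rightarrow> bool" where
  "multivector_field K \<V> \<longleftrightarrow>
     (\<forall>V\<in>\<V>. V \<noteq> {} \<and> convex_in K V) \<and> \<Union>\<V> = K \<and>
     (\<forall>V\<in>\<V>. \<forall>W\<in>\<V>. V \<noteq> W \<longrightarrow> V \<inter> W = {})"

definition mvf_class :: "'v set set set \<Rightarrow> 'v set \<Rightarrow> 'v set set" where
  "mvf_class \<V> \<sigma> = (THE V. V \<in> \<V> \<and> \<sigma> \<in> V)"

definition mvf_F :: "'v set set \<Rightarrow> 'v set set set \<Rightarrow> 'v set \<Rightarrow> 'v set set" where
  "mvf_F K \<V> \<sigma> = mvf_class \<V> \<sigma> \<union> cl K \<sigma>"

definition is_path :: "'v set set \<Rightarrow> 'v set set set \<Rightarrow> 'v set list \<Rightarrow> bool" where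
  "is_path K \<V> xs \<longleftrightarrow> xs \<noteq> [] \<and> set xs \<subseteq> K \<and>
     (\<forall>k. Suc k < length xs \<longrightarrow> xs ! Suc k \<in> mvf_F K \<V> (xs ! k))"

(* Morse decomposition indexed by the finite poset (P, leP); (q,p) \<in> leP means q \<le>_P p *)
definition morse_decomposition ::
  "'v set set \<Rightarrow> 'v set set set \<Rightarrow> 'p set \<Rightarrow> ('p \<times> 'p) set \<Rightarrow> ('p \<Rightarrow> 'v set set) \<Rightarrow> bool" where
  "morse_decomposition K \<V> P leP M \<longleftrightarrow>
     finite P \<and> leP \<subseteq> P \<times> P \<and> partial_order_on P leP \<and>
     (\<forall>p\<in>P. M p \<noteq> {}) \<and> (\<Union>p\<in>P. M p) = K \<and>
     (\<forall>p\<in>P. \<forall>q\<in>P. p \<noteq> q \<longrightarrow> M p \<inter> M q = {}) \<and>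
     (\<forall>p\<in>P. \<forall>q\<in>P. \<forall>xs. is_path K \<V> xs \<and> hd xs \<in> M p \<and> last xs \<in> M q \<longrightarrow> (q, p) \<in> leP)"

definition morse_index :: "'p set \<Rightarrow> ('p \<Rightarrow> 'v set set) \<Rightarrow> 'v set \<Rightarrow> 'p" where
  "morse_index P M \<sigma> = (THE p. p \<in> P \<and> \<sigma> \<in> M p)"

definition admissible_enumeration ::
  "'v set set \<Rightarrow> 'p set \<Rightarrow> ('p \<times> 'p) set \<Rightarrow> ('p \<Rightarrow> 'v set set) \<Rightarrow> nat \<Rightarrow> (nat \<Rightarrow> 'v set) \<Rightarrow> bool" where
  "admissible_enumeration K P leP M n \<sigma> \<longleftrightarrow>
     bij_betw \<sigma> {1..n} K \<and>
     (\<exists>lin. linear_order_on P lin \<and> lin \<subseteq> P \<times> P \<and> leP \<subseteq> lin \<and>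
        (\<forall>i\<in>{1..n}. \<forall>j\<in>{1..n}. i \<le> j \<longrightarrow>
            (morse_index P M (\<sigma> i), morse_index P M (\<sigma> j)) \<in> lin)) \<and>
     (\<forall>i\<in>{1..n}. \<forall>j\<in>{1..n}. \<sigma> i \<subset> \<sigma> j \<longrightarrow> i < j)"

(* Z_2 matrices as boolean functions; rows/columns indexed by 1..n *)
definition boundary_matrix :: "(nat \<Rightarrow> 'v set) \<Rightarrow> nat \<Rightarrow> nat \<Rightarrow> nat \<Rightarrow> bool" where
  "boundary_matrix \<sigma> n = (\<lambda>i j. i \<in> {1..n} \<and> j \<in> {1..n} \<and>
      \<sigma> i \<subseteq> \<sigma> j \<and> card (\<sigma> i) + 1 = card (\<sigma> j))"

definition add_col :: "(nat \<Rightarrow> nat \<Rightarrow> bool) \<Rightarrow> nat \<Rightarrow> nat \<Rightarrow> nat \<Rightarrow> nat \<Rightarrow> bool" where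
  "add_col B s j = (\<lambda>i k. if k = j then (B i j \<noteq> B i s) else B i k)"

inductive reachable_by_col_adds :: "nat \<Rightarrow> (nat \<Rightarrow> nat \<Rightarrow> bool) \<Rightarrow> (nat \<Rightarrow> nat \<Rightarrow> bool) \<Rightarrow> bool"
  for n A where
  refl: "reachable_by_col_adds n A A"
| step: "reachable_by_col_adds n A B \<Longrightarrow> s \<in> {1..n} \<Longrightarrow> j \<in> {1..n} \<Longrightarrow> s < j \<Longrightarrow>
         reachable_by_col_adds n A (add_col B s j)"

definition col_nonzero :: "nat \<Rightarrow> (nat \<Rightarrow> nat \<Rightarrow> bool) \<Rightarrow> nat \<Rightarrow> bool" where
  "col_nonzero n B j \<longleftrightarrow> (\<exists>i\<in>{1..n}. B i j)"

definition low :: "nat \<Rightarrow> (nat \<Rightarrow> nat \<Rightarrow> bool) \<Rightarrow> nat \<Rightarrow> nat" where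
  "low n B j = Max {i\<in>{1..n}. B i j}"

definition pivot :: "nat \<Rightarrow> (nat \<Rightarrow> nat \<Rightarrow> bool) \<Rightarrow> nat \<Rightarrow> nat option" where
  "pivot n B j = (if col_nonzero n B j then Some (low n B j) else None)"

definition same_morse_set :: "'p set \<Rightarrow> ('p \<Rightarrow> 'v set set) \<Rightarrow> 'v set \<Rightarrow> 'v set \<Rightarrow> bool" where
  "same_morse_set P M \<sigma> \<tau> \<longleftrightarrow> (\<exists>p\<in>P. \<sigma> \<in> M p \<and> \<tau> \<in> M p)"

definition homogeneous ::
  "'p set \<Rightarrow> ('p \<Rightarrow> 'v set set) \<Rightarrow> (nat \<Rightarrow> 'v set) \<Rightarrow> nat \<Rightarrow> (nat \<Rightarrow> nat \<Rightarrow> bool) \<Rightarrow> nat \<Rightarrow> bool" where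
  "homogeneous P M \<sigma> n B j \<longleftrightarrow>
     col_nonzero n B j \<and> same_morse_set P M (\<sigma> j) (\<sigma> (low n B j))"

end

theory Submission
  imports Defs
begin

text \<open>Adding column \<open>s\<close> to column \<open>j\<close> can only change the pivot of \<open>j\<close> if both
  columns have the same pivot \<open>l\<close>. Column operations to the right keep the matrix strictly
  upper triangular, so \<open>l < s < j\<close>. Since \<open>\<sigma>\<^sub>l\<close> and \<open>\<sigma>\<^sub>j\<close> lie in a common Morse set and an
  admissible enumeration lists each Morse set as a contiguous block, \<open>\<sigma>\<^sub>s\<close> lies in it too.\<close>

lemma
  assumes "col_nonzero n B j"
  shows low_in_range: "low n B j \<in> {1..n}" and low_entry: "B (low n B j) j"
proof -
  have "low n B j \<in> {i\<in>{1..n}. B i j}"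
    unfolding low_def using assms by (intro Max_in) (auto simp: col_nonzero_def)
  then show "low n B j \<in> {1..n}" and "B (low n B j) j" by auto
qed

lemma le_low:
  assumes "i \<in> {1..n}" and "B i j"
  shows "i \<le> low n B j"
  using assms unfolding low_def by simp

lemma pivot_eqI:
  assumes "l \<in> {1..n}" and "B l j" and "\<And>i. i \<in> {1..n} \<Longrightarrow> B i j \<Longrightarrow> i \<le> l"
  shows "pivot n B j = Some l"
proof -
  have nonzero: "col_nonzero n B j"
    using assms(1,2) unfolding col_nonzero_def by blast
  then have "low n B j = l"
    using assms le_low low_in_range low_entry by (metis antisym)
  with nonzero show ?thesis
    unfolding pivot_def by simp
qed

lemma pivot_add_col_unchanged:
  assumes "col_nonzero n B s" and "col_nonzero n B j" and "low n B s < low n B j"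
  shows "pivot n (add_col B s j) j = pivot n B j"
proof -
  have "pivot n (add_col B s j) j = Some (low n B j)"
  proof (rule pivot_eqI)
    show "low n B j \<in> {1..n}"
      using assms(2) by (rule low_in_range)
    have "\<not> B (low n B j) s"
      using assms(3) le_low[of "low n B j" n B s] low_in_range[OF assms(2)] by auto
    then show "add_col B s j (low n B j) j"
      using low_entry[OF assms(2)] unfolding add_col_def by simp
    show "i \<le> low n B j" if "i \<in> {1..n}" and "add_col B s j i j" for i
      using that assms(3) le_low[of i n B j] le_low[of i n B s]
      unfolding add_col_def by (cases "B i j") auto
  qed
  with assms(2) show ?thesis
    unfolding pivot_def by simp
qed

lemma pivot_add_col_changed_imp_low_eq:
  assumes "col_nonzero n B s" and "col_nonzero n B j" and "B (low n B s) j"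
    and "pivot n (add_col B s j) j \<noteq> pivot n B j"
  shows "low n B s = low n B j"
proof -
  have "low n B s \<le> low n B j"
    using assms(1,3) le_low low_in_range by blast
  then show ?thesis
    using pivot_add_col_unchanged[OF assms(1,2)] assms(4) by (metis le_neq_implies_less)
qed

definition strictly_upper_triangular :: "(nat \<Rightarrow> nat \<Rightarrow> bool) \<Rightarrow> bool" where
  "strictly_upper_triangular B \<longleftrightarrow> (\<forall>i k. B i k \<longrightarrow> i < k)"

lemma boundary_matrix_strictly_upper_triangular:
  assumes "\<forall>i\<in>{1..n}. \<forall>k\<in>{1..n}. \<sigma> i \<subset> \<sigma> k \<longrightarrow> i < k"
  shows "strictly_upper_triangular (boundary_matrix \<sigma> n)"
  unfolding strictly_upper_triangular_def
proof (intro allI impI)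
  fix i k
  assume "boundary_matrix \<sigma> n i k"
  then have "i \<in> {1..n}" and "k \<in> {1..n}" and "\<sigma> i \<subset> \<sigma> k"
    unfolding boundary_matrix_def by auto
  with assms show "i < k" by blast
qed

lemma strictly_upper_triangular_add_col:
  assumes "strictly_upper_triangular B" and "s < j"
  shows "strictly_upper_triangular (add_col B s j)"
  using assms unfolding strictly_upper_triangular_def add_col_def by (auto dest: less_trans)

lemma reachable_by_col_adds_strictly_upper_triangular:
  assumes "reachable_by_col_adds n A B" and "strictly_upper_triangular A"
  shows "strictly_upper_triangular B"
  using assms by induction (auto intro: strictly_upper_triangular_add_col)

lemma morse_index_eq:
  assumes "morse_decomposition K \<V> P leP M" and "p \<in> P" and "x \<in> M p"
  shows "morse_index P M x = p"
  unfolding morse_index_def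
proof (rule the_equality)
  show "p \<in> P \<and> x \<in> M p" using assms(2,3) ..
  show "q = p" if "q \<in> P \<and> x \<in> M q" for q
    using that assms unfolding morse_decomposition_def by blast
qed

lemma admissible_enumeration_morse_set_between:
  assumes "morse_decomposition K \<V> P leP M" and "admissible_enumeration K P leP M n \<sigma>"
    and "i \<le> k" and "k \<le> m" and "i \<in> {1..n}" and "m \<in> {1..n}"
    and "p \<in> P" and "\<sigma> i \<in> M p" and "\<sigma> m \<in> M p"
  shows "\<sigma> k \<in> M p"
proof -
  have k: "k \<in> {1..n}" using assms(3-6) by simp
  obtain lin where lin: "linear_order_on P lin"
    and ordered: "\<forall>i\<in>{1..n}. \<forall>j\<in>{1..n}. i \<le> j \<longrightarrow>
                   (morse_index P M (\<sigma> i), morse_index P M (\<sigma> j)) \<in> lin"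
    using assms(2) unfolding admissible_enumeration_def by blast
  have "(p, morse_index P M (\<sigma> k)) \<in> lin" and "(morse_index P M (\<sigma> k), p) \<in> lin"
    using ordered assms k morse_index_eq[OF assms(1)] by metis+
  moreover have "antisym lin"
    using lin unfolding linear_order_on_def partial_order_on_def by blast
  ultimately have index_k: "morse_index P M (\<sigma> k) = p"
    by (simp add: antisym_def)
  have "\<sigma> k \<in> K"
    using assms(2) k unfolding admissible_enumeration_def bij_betw_def by blast
  then obtain q where "q \<in> P" and "\<sigma> k \<in> M q"
    using assms(1) unfolding morse_decomposition_def by blast
  with index_k show ?thesis
    using morse_index_eq[OF assms(1)] by metis
qed

theorem proposition2:
  fixes K :: "'v set set" and \<V> :: "'v set set set"
    and P :: "'p set" and leP :: "('p \<times> 'p) set" and M :: "'p \<Rightarrow> 'v set set"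
    and n :: nat and \<sigma> :: "nat \<Rightarrow> 'v set"
    and A B :: "nat \<Rightarrow> nat \<Rightarrow> bool" and s j :: nat
  assumes "simplicial_complex K"
    and "multivector_field K \<V>"
    and "morse_decomposition K \<V> P leP M"
    and "admissible_enumeration K P leP M n \<sigma>"
    and "A = boundary_matrix \<sigma> n"
    and "reachable_by_col_adds n A B"
    and "j \<in> {1..n}" and "s \<in> {1..n}" and "s < j"
    and "homogeneous P M \<sigma> n B j"
    and "col_nonzero n B s"
    and "B (low n B s) j"
    and "pivot n (add_col B s j) j \<noteq> pivot n B j"
  shows "homogeneous P M \<sigma> n B s \<and> same_morse_set P M (\<sigma> s) (\<sigma> j) \<and> low n B s = low n B j"
proof -
  have same_low: "low n B s = low n B j"
    using assms(10-13) pivot_add_col_changed_imp_low_eq unfolding homogeneous_def by blast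
  have "\<forall>i\<in>{1..n}. \<forall>k\<in>{1..n}. \<sigma> i \<subset> \<sigma> k \<longrightarrow> i < k"
    using assms(4) unfolding admissible_enumeration_def by blast
  then have "strictly_upper_triangular B"
    using assms(5,6) boundary_matrix_strictly_upper_triangular
      reachable_by_col_adds_strictly_upper_triangular by blast
  then have low_before_s: "low n B j < s"
    using low_entry[OF assms(11)] same_low unfolding strictly_upper_triangular_def by auto
  have low_range: "low n B j \<in> {1..n}"
    using assms(10) low_in_range unfolding homogeneous_def by blast
  obtain p where p: "p \<in> P" "\<sigma> j \<in> M p" "\<sigma> (low n B j) \<in> M p"
    using assms(10) unfolding homogeneous_def same_morse_set_def by blast
  then have "\<sigma> s \<in> M p"
    using admissible_enumeration_morse_set_between[OF assms(3,4), of "low n B j" s j]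
      low_before_s low_range assms(7,9) by simp
  then show ?thesis
    using p assms(11) same_low unfolding homogeneous_def same_morse_set_def by metis
qed

end
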